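(* For all $R\in(0,1)$ and all $Z_n=(z_1,\dots,z_n)\in U^n$, \[ \max_{|z|\le R}|B_q(Z_n,z)|\ge |q(0)|\prod_{j=1}^n\max\{R,|z_j|\}. \]
   Context: $U$ is the open unit disc and $E\subset U$ is a set with infinitely many points whose set $E_0$ of nontangential limit points has Lebesgue measure zero on $\partial U$ (a point $\zeta\in\partial U$ is a nontangential limit point of $E$ if some sequence $(w_n)$ in $E$ satisfies $w_n\to\zeta$ and $|w_n-\zeta|=O(1-|w_n|)$). The function $q$ is defined as follows: if $\overline E\cap\partial U=\emptyset$, $q\equiv1$; otherwise $q$ is a holomorphic function on $U$ with $0<|q(z)|<1$ on $U$ and $\lim_{z\in E,|z|\to1}q(z)=0$ (such a function exists by a theorem of Hayman), normalized so that $\sup_U|q|=1$. For $Z_n=(z_1,\dots,z_n)$, $B(Z_n,z)=\prod_{j=1}^n\frac{z-z_j}{1-\overline{z_j}z}$ and $B_q(Z_n,z)=B(Z_n,z)q(z)$. *)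

theory Defs
  imports "HOL-Complex_Analysis.Complex_Analysis"
begin

definition blaschke :: "nat \<Rightarrow> (nat \<Rightarrow> complex) \<Rightarrow> complex \<Rightarrow> complex" where
  "blaschke n zs z = (\<Prod>j=1..n. (z - zs j) / (1 - cnj (zs j) * z))"

definition nt_limit_point :: "complex set \<Rightarrow> complex \<Rightarrow> bool" where
  "nt_limit_point E \<zeta> \<longleftrightarrow> norm \<zeta> = 1 \<and>
     (\<exists>w :: nat \<Rightarrow> complex. (\<forall>n. w n \<in> E) \<and> w \<longlonglongrightarrow> \<zeta> \<and>
        (\<exists>C. \<forall>n. norm (w n - \<zeta>) \<le> C * (1 - norm (w n))))"

definition nt_limit_set :: "complex set \<Rightarrow> complex set" where
  "nt_limit_set E = {\<zeta>. nt_limit_point E \<zeta>}"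

definition circle_null :: "complex set \<Rightarrow> bool" where
  "circle_null A \<longleftrightarrow> {t \<in> {0..2*pi}. cis t \<in> A} \<in> null_sets lborel"

end

theory Submission
  imports Defs
begin

text \<open>Divide each Blaschke factor whose zero a lies in the open disc of radius R by the
  Blaschke factor R (z - a) / (R^2 - cnj a z) of that disc; the quotient is reflected_factor R a,
  with its zero R^2 / cnj a moved outside the disc. The divisor is unimodular on the circle of
  radius R, so the product g of q with the resulting factors has the same modulus as
  blaschke n zs * q there, while the factor for zs j now has modulus max R (norm (zs j)) at 0.
  The maximum modulus principle for g on the disc of radius R gives the bound.\<close>

definition blaschke_factor :: "complex \<Rightarrow> complex \<Rightarrow> complex" where
  "blaschke_factor a z = (z - a) / (1 - cnj a * z)"

definition reflected_factor :: "real \<Rightarrow> complex \<Rightarrow> complex \<Rightarrow> complex" where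
  "reflected_factor R a z = (complex_of_real (R\<^sup>2) - cnj a * z) / (complex_of_real R * (1 - cnj a * z))"

lemma blaschke_eq_prod_blaschke_factor:
  "blaschke n zs z = (\<Prod>j=1..n. blaschke_factor (zs j) z)"
  unfolding blaschke_def blaschke_factor_def ..

lemma blaschke_denominator_nonzero:
  fixes a z :: complex
  assumes "norm a < 1" "norm z < 1"
  shows "1 - cnj a * z \<noteq> 0"
proof
  assume "1 - cnj a * z = 0"
  then have "norm a * norm z = 1"
    by (metis complex_mod_cnj eq_iff_diff_eq_0 norm_mult norm_one)
  moreover have "norm a * norm z < 1"
    using assms mult_left_le[of "norm z" "norm a"] by simp
  ultimately show False by simp
qed

lemma holomorphic_on_blaschke_factor:
  "norm a < 1 \<Longrightarrow> blaschke_factor a holomorphic_on ball 0 1"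
  unfolding blaschke_factor_def
  using blaschke_denominator_nonzero by (intro holomorphic_intros) auto

lemma holomorphic_on_reflected_factor:
  "norm a < 1 \<Longrightarrow> 0 < R \<Longrightarrow> reflected_factor R a holomorphic_on ball 0 1"
  unfolding reflected_factor_def
  using blaschke_denominator_nonzero by (intro holomorphic_intros) auto

lemma holomorphic_on_blaschke:
  "\<forall>j\<in>{1..n}. zs j \<in> ball 0 1 \<Longrightarrow> blaschke n zs holomorphic_on ball 0 1"
  unfolding blaschke_eq_prod_blaschke_factor[abs_def]
  by (intro holomorphic_on_prod) (auto intro: holomorphic_on_blaschke_factor)

lemma norm_reflected_factor_sphere:
  fixes a z :: complex
  assumes "norm z = R" "0 < R"
  shows "norm (reflected_factor R a z) = norm (blaschke_factor a z)"
proof -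
  have "complex_of_real (R\<^sup>2) = z * cnj z"
    using assms(1) by (metis complex_norm_square)
  then have "complex_of_real (R\<^sup>2) - cnj a * z = z * cnj (z - a)"
    by (simp add: algebra_simps)
  then have "norm (complex_of_real (R\<^sup>2) - cnj a * z) = R * norm (z - a)"
    using assms(1) by (metis complex_mod_cnj norm_mult)
  then show ?thesis
    using assms by (simp add: reflected_factor_def blaschke_factor_def norm_divide norm_mult)
qed

lemma norm_reflected_factor_0: "0 < R \<Longrightarrow> norm (reflected_factor R a 0) = R"
  by (simp add: reflected_factor_def norm_divide power2_eq_square)

lemma norm_blaschke_factor_0: "norm (blaschke_factor a 0) = norm a"
  by (simp add: blaschke_factor_def)

lemma norm_center_le_Sup_cball_if_norm_eq_on_sphere:
  fixes f g :: "complex \<Rightarrow> complex"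
  assumes "g holomorphic_on ball c r" "continuous_on (cball c r) g"
    and "continuous_on (cball c r) f" "0 < r"
    and "\<And>z. z \<in> sphere c r \<Longrightarrow> norm (g z) = norm (f z)"
  shows "norm (g c) \<le> (SUP z\<in>cball c r. norm (f z))"
proof (rule maximum_modulus_frontier[where f = g and S = "ball c r" and \<xi> = c])
  have "compact ((\<lambda>z. norm (f z)) ` cball c r)"
    using assms(3) by (intro compact_continuous_image continuous_intros) auto
  then have bdd: "bdd_above ((\<lambda>z. norm (f z)) ` cball c r)"
    by (simp add: bounded_imp_bdd_above compact_imp_bounded)
  fix z assume "z \<in> frontier (ball c r)"
  then have "z \<in> sphere c r"
    using \<open>0 < r\<close> by simp
  then show "norm (g z) \<le> (SUP z\<in>cball c r. norm (f z))"
    using assms(5) bdd by (auto intro: cSUP_upper)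
qed (use assms in auto)

lemma norm_mult_prod_max_le_Sup_blaschke:
  fixes q :: "complex \<Rightarrow> complex"
  assumes q: "q holomorphic_on ball 0 1"
    and R: "0 < R" "R < 1"
    and zs: "\<forall>j\<in>{1..n}. zs j \<in> ball 0 1"
  shows "norm (q 0) * (\<Prod>j=1..n. max R (norm (zs j)))
           \<le> (SUP z\<in>cball 0 R. norm (blaschke n zs z * q z))"
proof -
  define h where "h j = (if norm (zs j) < R then reflected_factor R (zs j)
                         else blaschke_factor (zs j))" for j
  define g where "g z = q z * (\<Prod>j=1..n. h j z)" for z
  have "h j holomorphic_on ball 0 1" if "j \<in> {1..n}" for j
    using zs that R
    by (simp add: h_def holomorphic_on_reflected_factor holomorphic_on_blaschke_factor)
  then have g: "g holomorphic_on ball 0 1"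
    unfolding g_def using q by (intro holomorphic_intros) auto
  have f: "(\<lambda>z. blaschke n zs z * q z) holomorphic_on ball 0 1"
    using holomorphic_on_blaschke[OF zs] q by (intro holomorphic_intros)
  have sub: "cball 0 R \<subseteq> ball 0 1"
    using R by auto
  have "norm (g 0) \<le> (SUP z\<in>cball 0 R. norm (blaschke n zs z * q z))"
  proof (rule norm_center_le_Sup_cball_if_norm_eq_on_sphere)
    show "g holomorphic_on ball 0 R"
      using g R by (auto intro: holomorphic_on_subset)
    show "continuous_on (cball 0 R) g" "continuous_on (cball 0 R) (\<lambda>z. blaschke n zs z * q z)"
      using g f sub by (auto intro: holomorphic_on_imp_continuous_on continuous_on_subset)
    fix z :: complex assume "z \<in> sphere 0 R"
    then have "norm (h j z) = norm (blaschke_factor (zs j) z)" for j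
      using R by (simp add: h_def norm_reflected_factor_sphere)
    then show "norm (g z) = norm (blaschke n zs z * q z)"
      by (simp add: g_def blaschke_eq_prod_blaschke_factor norm_mult prod_norm[symmetric])
  qed (use R in auto)
  moreover have "norm (h j 0) = max R (norm (zs j))" for j
    using R by (simp add: h_def norm_reflected_factor_0 norm_blaschke_factor_0)
  then have "norm (g 0) = norm (q 0) * (\<Prod>j=1..n. max R (norm (zs j)))"
    by (simp add: g_def norm_mult prod_norm[symmetric])
  ultimately show ?thesis
    by simp
qed

theorem proposition3p2:
  fixes E :: "complex set" and q :: "complex \<Rightarrow> complex"
    and R :: real and n :: nat and zs :: "nat \<Rightarrow> complex"
  assumes E_sub: "E \<subseteq> ball 0 1"
    and E_inf: "infinite E"
    and E0_null: "circle_null (nt_limit_set E)"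
    and q_triv: "closure E \<inter> sphere 0 1 = {} \<Longrightarrow> (\<forall>z\<in>ball 0 1. q z = 1)"
    and q_nontriv: "closure E \<inter> sphere 0 1 \<noteq> {} \<Longrightarrow>
        q holomorphic_on ball 0 1 \<and>
        (\<forall>z\<in>ball 0 1. 0 < norm (q z) \<and> norm (q z) < 1) \<and>
        (\<forall>\<epsilon>>0. \<exists>r<1. \<forall>z\<in>E. r < norm z \<longrightarrow> norm (q z) < \<epsilon>) \<and>
        (SUP z\<in>ball 0 1. norm (q z)) = 1"
    and R: "0 < R" "R < 1"
    and zs: "\<forall>j\<in>{1..n}. zs j \<in> ball 0 1"
  shows "(SUP z\<in>cball 0 R. norm (blaschke n zs z * q z))
           \<ge> norm (q 0) * (\<Prod>j=1..n. max R (norm (zs j)))"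
proof -
  have "q holomorphic_on ball 0 1"
  proof (cases "closure E \<inter> sphere 0 1 = {}")
    case True
    then have "\<forall>z\<in>ball 0 1. q z = 1"
      using q_triv by blast
    then show ?thesis
      using holomorphic_transform[of "\<lambda>_. 1" "ball 0 1" q] by auto
  next
    case False
    then show ?thesis
      using q_nontriv by blast
  qed
  then show ?thesis
    using norm_mult_prod_max_le_Sup_blaschke R zs by simp
qed

end
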